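(* Let $G$ be a global type. The language of the LTS $\mathrm{cat}(G)$ coincides with the language of the LTS on global types, with initial state $G$, whose transitions are those derivable using only the rules [Choice] and [Rec].
   Context: Fix disjoint sets $\mathfrak{P}$ (participants) and $\mathcal{M}$ (messages); interactions are $\mathsf{p}\to\mathsf{q}:\mathsf{m}$ with $\mathsf{p}\neq\mathsf{q}\in\mathfrak{P}$, $\mathsf{m}\in\mathcal{M}$, forming the set $\mathcal{L}_{int}$; $\mathrm{ptp}(\mathsf{p}\to\mathsf{q}:\mathsf{m})=\{\mathsf{p},\mathsf{q}\}$. Global types: $G ::= \mathbf{end} \mid \mu\mathbf{r}.G \mid \mathbf{r} \mid \sum_{i\in I}\mathsf{p}\to\mathsf{q}_i:\mathsf{m}_i;G_i$ (written $\mathsf{p}\to\mathsf{q}:\mathsf{m};G$ when $|I|=1$); $\mu\mathbf{r}$ binds $\mathbf{r}$, occurrences of recursion variables are guarded, and bound variable names are all distinct and distinct from free ones. Operational semantics (LTS with labels in $\mathcal{L}_{int}$): [Choice] $\sum_{i\in I}\mathsf{p}\to\mathsf{q}_i:\mathsf{m}_i;G_i\xrightarrow{\mathsf{p}\to\mathsf{q}_j:\mathsf{m}_j}G_j$ for $j\in I$; [Rec] if $G[\mu\mathbf{r}.G/\mathbf{r}]\xrightarrow{\alpha}G'$ then $\mu\mathbf{r}.G\xrightarrow{\alpha}G'$; [Pass] if $G_j\xrightarrow{\alpha}G'_j$ and $\mathsf{p},\mathsf{q}_j\notin\mathrm{ptp}(\alpha)$ for all $j\in I$, then $\sum_{i\in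 I}\mathsf{p}\to\mathsf{q}_i:\mathsf{m}_i;G_i\xrightarrow{\alpha}\sum_{i\in I}\mathsf{p}\to\mathsf{q}_i:\mathsf{m}_i;G'_i$. $\mathrm{cat}(G)$ is the LTS with the subterms of $G$ as states, initial state $G$, labels $\mathcal{L}_{int}$, and transitions $\mathrm{catr}(G)$, where $\mathrm{catr}(\mathbf{end})=\mathrm{catr}(\mathbf{r})=\emptyset$, $\mathrm{catr}(\mu\mathbf{r}.G)=\mathrm{catr}(G)\cup\{\mathbf{r}\xrightarrow{\varepsilon}\mu\mathbf{r}.G,\ \mu\mathbf{r}.G\xrightarrow{\varepsilon}G\}$, and $\mathrm{catr}(\sum_{i\in I}\mathsf{p}\to\mathsf{q}_i:\mathsf{m}_i;G_i)=\bigcup_{j\in I}(\{\sum_{i\in I}\mathsf{p}\to\mathsf{q}_i:\mathsf{m}_i;G_i\xrightarrow{\mathsf{p}\to\mathsf{q}_j:\mathsf{m}_j}G_j\}\cup\mathrm{catr}(G_j))$. The language of an LTS is the set of traces (concatenations of labels, $\varepsilon$ being the identity) of its finite or infinite runs from the initial state. *)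

theory Defs
  imports Main
begin

text \<open>Participants have type 'p, messages type 'm, recursion variables type 'v.
  A branching \<open>\<Sum>\<^sub>i\<^sub>\<in>\<^sub>I p\<rightarrow>q\<^sub>i:m\<^sub>i;G\<^sub>i\<close> is represented as \<open>Choice p bs\<close> where bs is the
  (finite) list of the branches (q_i, m_i, G_i).\<close>

datatype ('p, 'm, 'v) gty =
    End
  | Rec 'v "('p, 'm, 'v) gty"
  | Var 'v
  | Choice 'p "('p \<times> 'm \<times> ('p, 'm, 'v) gty) list"

text \<open>Interactions \<open>p \<rightarrow> q : m\<close> are triples (p, q, m).\<close>
type_synonym ('p, 'm) interaction = "'p \<times> 'p \<times> 'm"

fun ptp :: "('p, 'm) interaction \<Rightarrow> 'p set" where
  "ptp (p, q, m) = {p, q}"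

fun fv :: "('p, 'm, 'v) gty \<Rightarrow> 'v set" where
  "fv End = {}"
| "fv (Var r) = {r}"
| "fv (Rec r G) = fv G - {r}"
| "fv (Choice p bs) = (\<Union>b \<in> set bs. fv (snd (snd b)))"

fun bvs :: "('p, 'm, 'v) gty \<Rightarrow> 'v list" where
  "bvs End = []"
| "bvs (Var r) = []"
| "bvs (Rec r G) = r # bvs G"
| "bvs (Choice p bs) = concat (map (\<lambda>b. bvs (snd (snd b))) bs)"

fun unguarded :: "('p, 'm, 'v) gty \<Rightarrow> 'v set" where
  "unguarded End = {}"
| "unguarded (Var r) = {r}"
| "unguarded (Rec r G) = unguarded G - {r}"
| "unguarded (Choice p bs) = {}"

fun guarded_ok :: "('p, 'm, 'v) gty \<Rightarrow> bool" where
  "guarded_ok End = True"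
| "guarded_ok (Var r) = True"
| "guarded_ok (Rec r G) = (r \<notin> unguarded G \<and> guarded_ok G)"
| "guarded_ok (Choice p bs) = (\<forall>b \<in> set bs. p \<noteq> fst b \<and> guarded_ok (snd (snd b)))"

definition wf_gty :: "('p, 'm, 'v) gty \<Rightarrow> bool" where
  "wf_gty G \<longleftrightarrow> guarded_ok G \<and> distinct (bvs G) \<and> set (bvs G) \<inter> fv G = {}"

text \<open>\<open>subst G r N\<close> is \<open>G[N/r]\<close>. Under the variable convention of the paper no capture
  arises, so substitution simply stops at a binder of the same name.\<close>
fun subst :: "('p, 'm, 'v) gty \<Rightarrow> 'v \<Rightarrow> ('p, 'm, 'v) gty \<Rightarrow> ('p, 'm, 'v) gty" where
  "subst End r N = End"
| "subst (Var s) r N = (if s = r then N else Var s)"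
| "subst (Rec s G) r N = (if s = r then Rec s G else Rec s (subst G r N))"
| "subst (Choice p bs) r N = Choice p (map (\<lambda>(q, m, G). (q, m, subst G r N)) bs)"

text \<open>An LTS is (states, initial state, transitions); labels are \<open>'l option\<close>, where
  None is the silent label \<open>\<epsilon>\<close>.\<close>
type_synonym ('s, 'l) lts = "'s set \<times> 's \<times> ('s \<times> 'l option \<times> 's) set"

datatype 'a word = Fin "'a list" | Inf "nat \<Rightarrow> 'a"

inductive fin_run :: "'s set \<Rightarrow> ('s \<times> 'l option \<times> 's) set \<Rightarrow> 's \<Rightarrow> 'l option list \<Rightarrow> bool"
  for S T where
  nil: "s \<in> S \<Longrightarrow> fin_run S T s []"
| step: "s \<in> S \<Longrightarrow> (s, a, s') \<in> T \<Longrightarrow> fin_run S T s' ls \<Longrightarrow> fin_run S T s (a # ls)"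

fun erase :: "'l option list \<Rightarrow> 'l list" where
  "erase [] = []"
| "erase (None # ls) = erase ls"
| "erase (Some a # ls) = a # erase ls"

definition inf_run :: "'s set \<Rightarrow> ('s \<times> 'l option \<times> 's) set \<Rightarrow> 's \<Rightarrow> (nat \<Rightarrow> 's) \<Rightarrow> (nat \<Rightarrow> 'l option) \<Rightarrow> bool" where
  "inf_run S T s0 st l \<longleftrightarrow> st 0 = s0 \<and> (\<forall>i. st i \<in> S \<and> (st i, l i, st (Suc i)) \<in> T)"

definition inf_trace :: "(nat \<Rightarrow> 'l option) \<Rightarrow> 'l word \<Rightarrow> bool" where
  "inf_trace l w \<longleftrightarrow>
     (\<exists>ws n. w = Fin ws \<and> (\<forall>i\<ge>n. l i = None) \<and> ws = erase (map l [0..<n]))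
   \<or> (\<exists>f. w = Inf f \<and> (\<exists>e. strict_mono e \<and> range e = {i. l i \<noteq> None} \<and> (\<forall>k. l (e k) = Some (f k))))"

definition lang :: "('s, 'l) lts \<Rightarrow> 'l word set" where
  "lang A = (case A of (S, s0, T) \<Rightarrow>
      {Fin (erase ls) | ls. fin_run S T s0 ls}
    \<union> {w. \<exists>st l. inf_run S T s0 st l \<and> inf_trace l w})"

inductive step_CR :: "('p, 'm, 'v) gty \<Rightarrow> ('p, 'm) interaction \<Rightarrow> ('p, 'm, 'v) gty \<Rightarrow> bool" where
  Choice: "(q, m, G') \<in> set bs \<Longrightarrow> step_CR (Choice p bs) (p, q, m) G'"
| Rec: "step_CR (subst G r (Rec r G)) \<alpha> G' \<Longrightarrow> step_CR (Rec r G) \<alpha> G'"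

definition lts_CR :: "('p, 'm, 'v) gty \<Rightarrow> (('p, 'm, 'v) gty, ('p, 'm) interaction) lts" where
  "lts_CR G = (UNIV, G, {(G1, Some \<alpha>, G2) | G1 \<alpha> G2. step_CR G1 \<alpha> G2})"

fun subterms :: "('p, 'm, 'v) gty \<Rightarrow> ('p, 'm, 'v) gty set" where
  "subterms End = {End}"
| "subterms (Var r) = {Var r}"
| "subterms (Rec r G) = insert (Rec r G) (subterms G)"
| "subterms (Choice p bs) = insert (Choice p bs) (\<Union>b \<in> set bs. subterms (snd (snd b)))"

fun catr :: "('p, 'm, 'v) gty \<Rightarrow> (('p, 'm, 'v) gty \<times> ('p, 'm) interaction option \<times> ('p, 'm, 'v) gty) set" where
  "catr End = {}"
| "catr (Var r) = {}"
| "catr (Rec r G) = catr G \<union> {(Var r, None, Rec r G), (Rec r G, None, G)}"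
| "catr (Choice p bs) =
     (\<Union>b \<in> set bs. {(Choice p bs, Some (p, fst b, fst (snd b)), snd (snd b))} \<union> catr (snd (snd b)))"

definition cat :: "('p, 'm, 'v) gty \<Rightarrow> (('p, 'm, 'v) gty, ('p, 'm) interaction) lts" where
  "cat G = (subterms G, G, catr G)"

end

theory Submission
  imports Defs "HOL-Library.Infinite_Set"
begin

(* A state X of cat(G) is a subterm of G.  It stands for the global type ssubst \<sigma> X, where \<sigma>
   sends each recursion variable bound above X to the unfolding of its binder (unfold_env).
   Read this way, a visible transition of cat(G) is a [Choice] step, and a silent one (unfolding
   a binder, or jumping from a variable back to its binder) does not change the [Choice]/[Rec]
   transitions of the represented type.  Conversely, a [Choice]/[Rec] derivation of a step of
   ssubst \<sigma> X unwinds into silent steps of cat(G) followed by one visible step.  So each LTS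
   weakly simulates the other, and weak simulations preserve the traces of finite and infinite
   runs. *)

section \<open>Weak simulations preserve languages\<close>

lemma erase_append: "erase (xs @ ys) = erase xs @ erase ys"
  by (induction xs rule: erase.induct) auto

lemma inf_run_step: "inf_run S T s0 st l \<Longrightarrow> (st i, l i, st (Suc i)) \<in> T"
  by (simp add: inf_run_def)

lemma fin_run_inf_run_prefix:
  "inf_run S T s0 st l \<Longrightarrow> fin_run S T (st k) (map l [k..<k + n])"
proof (induction n arbitrary: k)
  case 0
  then show ?case by (auto simp: inf_run_def intro: fin_run.nil)
next
  case (Suc n)
  have "[k..<k + Suc n] = k # [Suc k..<Suc k + n]" by (simp add: upt_rec)
  moreover have "st k \<in> S" and "(st k, l k, st (Suc k)) \<in> T"
    using Suc.prems by (auto simp: inf_run_def)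
  ultimately show ?case
    using Suc.IH[OF Suc.prems, of "Suc k"] by (auto intro: fin_run.step)
qed

(* An infinite run with finitely many visible labels has the trace of a finite prefix. *)
lemma lang_alt_def:
  "lang (S, s0, T) = {Fin (erase ls) | ls. fin_run S T s0 ls}
     \<union> {Inf f | f. \<exists>st l. inf_run S T s0 st l \<and> inf_trace l (Inf f)}"
proof -
  have "\<exists>ls. fin_run S T s0 ls \<and> ws = erase ls"
    if run: "inf_run S T s0 st l" and "inf_trace l (Fin ws)" for st l ws
  proof -
    obtain n where "ws = erase (map l [0..<n])"
      using \<open>inf_trace l (Fin ws)\<close> unfolding inf_trace_def by auto
    moreover have "fin_run S T s0 (map l [0..<0 + n])"
      using fin_run_inf_run_prefix[OF run, of 0] run by (simp add: inf_run_def)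
    ultimately show ?thesis by auto
  qed
  then show ?thesis unfolding lang_def by (auto, metis word.exhaust)
qed

lemma strict_mono_range_gaps:
  fixes e :: "nat \<Rightarrow> nat"
  assumes "strict_mono e" and "range e = V"
  shows strict_mono_range_gap_0: "j < e 0 \<Longrightarrow> j \<notin> V"
    and strict_mono_range_gap_Suc: "e k < j \<Longrightarrow> j < e (Suc k) \<Longrightarrow> j \<notin> V"
  using assms by (auto simp: strict_mono_less)

lemma inf_trace_InfI:
  fixes c :: "nat \<Rightarrow> nat"
  assumes c0: "c 0 = 0" and c_Suc: "\<And>i. c (Suc i) = (if l i = None then c i else Suc (c i))"
    and label: "\<And>i. l i \<noteq> None \<Longrightarrow> l i = Some (a (c i))"
    and infinite: "infinite {i. l i \<noteq> None}"
  shows "inf_trace l (Inf a)"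
proof -
  let ?V = "{i. l i \<noteq> None}"
  define e where "e = enumerate ?V"
  have mono: "strict_mono e"
    unfolding e_def strict_mono_def using enumerate_mono[OF _ infinite] by blast
  have range: "range e = ?V"
    using bij_enumerate[OF infinite] by (simp add: bij_betw_def e_def)
  have c_const: "c (i + d) = c i" if "\<forall>j. i \<le> j \<and> j < i + d \<longrightarrow> l j = None" for i d
    using that by (induction d) (auto simp: c_Suc)
  have c_e: "c (e k) = k" for k
  proof (induction k)
    case 0
    show ?case
      using c_const[of 0 "e 0"] strict_mono_range_gap_0[OF mono range] c0 by auto
  next
    case (Suc k)
    have "e k < e (Suc k)" using mono by (simp add: strict_mono_less)
    then have "c (e (Suc k)) = c (Suc (e k))"
      using c_const[of "Suc (e k)" "e (Suc k) - Suc (e k)"]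
        strict_mono_range_gap_Suc[OF mono range, of k] by auto
    also have "\<dots> = Suc k" using range Suc by (auto simp: c_Suc)
    finally show ?case .
  qed
  have "l (e k) = Some (a k)" for k
  proof -
    have "e k \<in> ?V" using range by blast
    then show ?thesis using label[of "e k"] c_e by simp
  qed
  then show ?thesis unfolding inf_trace_def using mono range by blast
qed

inductive weak_step :: "('s \<times> 'l option \<times> 's) set \<Rightarrow> 's \<Rightarrow> 'l option \<Rightarrow> ('l option \<times> 's) list \<Rightarrow> 's \<Rightarrow> bool"
  for T where
  stay: "weak_step T s None [] s"
| visible: "(s, Some a, s') \<in> T \<Longrightarrow> weak_step T s (Some a) [(Some a, s')] s'"
| silent: "(s, None, s') \<in> T \<Longrightarrow> weak_step T s' a ps s'' \<Longrightarrow> weak_step T s a ((None, s') # ps) s''"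

lemma weak_step_append:
  fixes T :: "('s \<times> 'l option \<times> 's) set"
  assumes "weak_step T s None ps s'" and "weak_step T s' a qs s''"
  shows "weak_step T s a (ps @ qs) s''"
  using assms by (induction s "None :: 'l option" ps s' rule: weak_step.induct)
    (auto intro: weak_step.silent)

lemma erase_weak_step: "weak_step T s a ps s' \<Longrightarrow> erase (map fst ps) = erase [a]"
  by (induction rule: weak_step.induct) auto

lemma fin_run_weak_step:
  assumes "weak_step T s a ps s'" and "s \<in> S" and "\<And>x b y. (x, b, y) \<in> T \<Longrightarrow> y \<in> S"
    and "fin_run S T s' ls"
  shows "fin_run S T s (map fst ps @ ls)"
  using assms by (induction rule: weak_step.induct) (auto intro: fin_run.step)

lemma weak_step_Some_Nil: "\<not> weak_step T s (Some a) [] s'"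
proof
  assume "weak_step T s (Some a) [] s'"
  then show False by (cases rule: weak_step.cases)
qed

lemma weak_step_Some_ConsE:
  assumes "weak_step T s (Some a) ((lb, z) # rest) s'"
  obtains "rest = []" "lb = Some a" "(s, lb, z) \<in> T" "z = s'"
  | "rest \<noteq> []" "lb = None" "(s, lb, z) \<in> T" "weak_step T z (Some a) rest s'"
  using assms
proof (cases rule: weak_step.cases)
  case visible
  then show ?thesis using that(1) by blast
next
  case silent
  moreover have "rest \<noteq> []" using silent by (auto simp: weak_step_Some_Nil)
  ultimately show ?thesis using that(2) by blast
qed

lemma weak_step_chain:
  assumes step: "\<And>k y. P k y \<Longrightarrow> \<exists>ps y'. weak_step T y (Some (a k)) ps y' \<and> P (Suc k) y'"
    and "P 0 y0"
  shows "\<exists>ys pss. ys 0 = y0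
    \<and> (\<forall>k. P k (ys k) \<and> weak_step T (ys k) (Some (a k)) (pss k) (ys (Suc k)))"
proof -
  have "\<exists>ys. \<forall>k. (P k (ys k) \<and> (k = 0 \<longrightarrow> ys k = y0))
      \<and> (\<exists>ps. weak_step T (ys k) (Some (a k)) ps (ys (Suc k)))"
  proof (rule dependent_nat_choice)
    fix y k assume "P k y \<and> (k = 0 \<longrightarrow> y = y0)"
    then show "\<exists>y'. (P (Suc k) y' \<and> (Suc k = 0 \<longrightarrow> y' = y0))
        \<and> (\<exists>ps. weak_step T y (Some (a k)) ps y')"
      using step[of k y] by auto
  qed (use \<open>P 0 y0\<close> in auto)
  then show ?thesis by metis
qed

lemma inf_run_of_weak_step_chain:
  fixes T :: "('s \<times> 'l option \<times> 's) set"
  assumes chain: "\<And>k. weak_step T (ys k) (Some (a k)) (pss k) (ys (Suc k))"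
    and in_S: "\<And>k. ys k \<in> S" and closed: "\<And>x b y. (x, b, y) \<in> T \<Longrightarrow> y \<in> S"
  shows "\<exists>st l. inf_run S T (ys 0) st l \<and> inf_trace l (Inf a)"
proof -
  define Inv where "Inv c \<longleftrightarrow> (case c of (y, k, ps) \<Rightarrow>
      y \<in> S \<and> weak_step T y (Some (a k)) ps (ys (Suc k)))" for c
  define nxt :: "'s \<times> nat \<times> ('l option \<times> 's) list \<Rightarrow> _" where "nxt c = (case c of (y, k, ps) \<Rightarrow>
      if tl ps = [] then (snd (hd ps), Suc k, pss (Suc k)) else (snd (hd ps), k, tl ps))"
    for c
  \<comment> \<open>In configuration (y, k, ps) the run is at y, and ps is what remains of the k-th weak step.\<close>
  define cfg where "cfg i = (nxt ^^ i) (ys 0, 0, pss 0)" for i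
  define st where "st i = fst (cfg i)" for i
  define count where "count i = fst (snd (cfg i))" for i
  define pending where "pending i = snd (snd (cfg i))" for i
  define l where "l i = fst (hd (pending i))" for i
  have step_Inv: "(y, lb, z) \<in> T \<and> Inv (nxt (y, k, (lb, z) # rest))
      \<and> (if rest = [] then lb = Some (a k) else lb = None)"
    if inv: "Inv (y, k, (lb, z) # rest)" for y k lb z rest
  proof -
    have "weak_step T y (Some (a k)) ((lb, z) # rest) (ys (Suc k))"
      using inv by (simp add: Inv_def)
    then show ?thesis
    proof (cases rule: weak_step_Some_ConsE)
      case 1
      then show ?thesis using chain in_S by (simp add: Inv_def nxt_def)
    next
      case 2
      then show ?thesis using closed by (auto simp: Inv_def nxt_def)
    qed
  qed
  have Inv_Cons: "\<exists>y k lb z rest. c = (y, k, (lb, z) # rest)" if inv: "Inv c" for c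
  proof -
    obtain y k ps where c: "c = (y, k, ps)" by (cases c)
    with inv have "weak_step T y (Some (a k)) ps (ys (Suc k))" by (simp add: Inv_def)
    then have "ps \<noteq> []" using weak_step_Some_Nil by fast
    then show ?thesis using c by (auto simp: neq_Nil_conv)
  qed
  have Inv_cfg: "Inv (cfg i)" for i
  proof (induction i)
    case 0
    show ?case using chain in_S by (simp add: Inv_def cfg_def)
  next
    case (Suc i)
    obtain y k lb z rest where "cfg i = (y, k, (lb, z) # rest)"
      using Inv_Cons[OF Suc] by blast
    then show ?case using step_Inv Suc by (simp add: cfg_def)
  qed
  have loc: "(st i, l i, st (Suc i)) \<in> T
      \<and> count (Suc i) = (if l i = None then count i else Suc (count i))
      \<and> (l i \<noteq> None \<longrightarrow> l i = Some (a (count i)))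
      \<and> (l i = None \<longrightarrow> length (pending (Suc i)) < length (pending i))" for i
  proof -
    obtain y k lb z rest where c: "cfg i = (y, k, (lb, z) # rest)"
      using Inv_Cons[OF Inv_cfg] by blast
    have "cfg (Suc i) = nxt (cfg i)" by (simp add: cfg_def)
    with step_Inv[of y k lb z rest] Inv_cfg[of i] c show ?thesis
      by (auto simp: st_def l_def count_def pending_def nxt_def)
  qed
  have visible_ahead: "\<exists>j\<ge>i. l j \<noteq> None" for i
  proof (induction "length (pending i)" arbitrary: i rule: less_induct)
    case less
    show ?case
    proof (cases "l i = None")
      case True
      then obtain j where "j \<ge> Suc i" "l j \<noteq> None" using less loc[of i] by blast
      then show ?thesis by (auto intro: Suc_leD)
    qed blast
  qed
  have "inf_trace l (Inf a)"
  proof (rule inf_trace_InfI[where c = count])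
    show "count 0 = 0" by (simp add: count_def cfg_def)
    show "infinite {i. l i \<noteq> None}"
      unfolding infinite_nat_iff_unbounded_le using visible_ahead by simp
  qed (use loc in auto)
  moreover have "st i \<in> S" for i
    using Inv_cfg[of i] by (cases "cfg i") (simp add: Inv_def st_def)
  then have "inf_run S T (ys 0) st l"
    using loc by (simp add: inf_run_def st_def cfg_def)
  ultimately show ?thesis by blast
qed

locale weak_simulation =
  fixes T1 :: "('s \<times> 'l option \<times> 's) set"
    and S2 :: "'t set" and T2 :: "('t \<times> 'l option \<times> 't) set"
    and R :: "'s \<Rightarrow> 't \<Rightarrow> bool"
  assumes simulate: "\<And>x y a x'. R x y \<Longrightarrow> (x, a, x') \<in> T1 \<Longrightarrow> \<exists>ps y'. weak_step T2 y a ps y' \<and> R x' y'"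
    and related_in_S2: "\<And>x y. R x y \<Longrightarrow> y \<in> S2"
    and T2_closed: "\<And>x b y. (x, b, y) \<in> T2 \<Longrightarrow> y \<in> S2"
begin

lemma simulate_fin_run:
  "fin_run S1 T1 x ls \<Longrightarrow> R x y \<Longrightarrow> \<exists>ls'. fin_run S2 T2 y ls' \<and> erase ls' = erase ls"
proof (induction arbitrary: y rule: fin_run.induct)
  case (nil x)
  then show ?case using related_in_S2 by (blast intro: fin_run.nil)
next
  case (step x a x' ls)
  obtain ps y' where ps: "weak_step T2 y a ps y'" and "R x' y'"
    using simulate step by blast
  then obtain ls' where run': "fin_run S2 T2 y' ls'" and "erase ls' = erase ls"
    using step.IH by blast
  have "erase (map fst ps @ ls') = erase [a] @ erase ls"
    using erase_weak_step[OF ps] \<open>erase ls' = erase ls\<close> by (simp add: erase_append)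
  also have "\<dots> = erase (a # ls)" by (cases a) simp_all
  finally have "erase (map fst ps @ ls') = erase (a # ls)" .
  moreover have "fin_run S2 T2 y (map fst ps @ ls')"
    by (rule fin_run_weak_step[OF ps related_in_S2[OF step.prems] _ run']) (rule T2_closed)
  ultimately show ?case by blast
qed

lemma simulate_silent_steps:
  assumes run: "inf_run S1 T1 x0 st l" and "R (st i) y" and "i \<le> i'"
    and silent: "\<And>j. i \<le> j \<Longrightarrow> j < i' \<Longrightarrow> l j = None"
  shows "\<exists>ps y'. weak_step T2 y None ps y' \<and> R (st i') y'"
  using \<open>i \<le> i'\<close>
proof (induction rule: dec_induct)
  case base
  have "weak_step T2 y None [] y" by (rule weak_step.stay)
  then show ?case using \<open>R (st i) y\<close> by blast
next
  case (step n)
  then obtain ps y' where ps: "weak_step T2 y None ps y'" and R: "R (st n) y'"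
    by blast
  have "(st n, None, st (Suc n)) \<in> T1"
    using inf_run_step[OF run, of n] silent[OF step.hyps] by simp
  with R obtain qs y'' where "weak_step T2 y' None qs y''" and "R (st (Suc n)) y''"
    using simulate by blast
  then show ?case using weak_step_append[OF ps] by blast
qed

lemma simulate_inf_run:
  assumes run: "inf_run S1 T1 x0 st l" and trace: "inf_trace l (Inf f)" and "R x0 y0"
  shows "\<exists>st' l'. inf_run S2 T2 y0 st' l' \<and> inf_trace l' (Inf f)"
proof -
  obtain e where mono: "strict_mono e" and range: "range e = {i. l i \<noteq> None}"
    and label: "\<And>k. l (e k) = Some (f k)"
    using trace unfolding inf_trace_def by auto
  \<comment> \<open>Between start k and the k-th visible label at e k the run takes only silent steps.\<close>
  define start where "start k = (case k of 0 \<Rightarrow> 0 | Suc k' \<Rightarrow> Suc (e k'))" for k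
  have start_le: "start k \<le> e k" for k
    using mono by (cases k) (auto simp: start_def strict_mono_less Suc_le_eq)
  have silent: "l j = None" if "start k \<le> j" and "j < e k" for k j
    using strict_mono_range_gaps[OF mono range] that by (cases k) (auto simp: start_def Suc_le_eq)
  have step_R: "\<exists>ps y'. weak_step T2 y (Some (f k)) ps y' \<and> R (st (start (Suc k))) y'"
    if "R (st (start k)) y" for k y
  proof -
    from that obtain ps y' where ps: "weak_step T2 y None ps y'" and "R (st (e k)) y'"
      using simulate_silent_steps[OF run _ start_le[of k] silent[of k]] by blast
    moreover have "(st (e k), Some (f k), st (start (Suc k))) \<in> T1"
      using inf_run_step[OF run, of "e k"] label[of k] by (simp add: start_def)
    ultimately obtain qs y'' where "weak_step T2 y' (Some (f k)) qs y''" "R (st (start (Suc k))) y''"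
      using simulate by blast
    then show ?thesis using weak_step_append[OF ps] by blast
  qed
  have init_R: "R (st (start 0)) y0" using run \<open>R x0 y0\<close> by (simp add: inf_run_def start_def)
  obtain ys pss where "ys 0 = y0" and R_ys: "\<And>k. R (st (start k)) (ys k)"
    and chain: "\<And>k. weak_step T2 (ys k) (Some (f k)) (pss k) (ys (Suc k))"
    using weak_step_chain[where P = "\<lambda>k y. R (st (start k)) y", OF step_R init_R] by blast
  show ?thesis
    using inf_run_of_weak_step_chain[of T2 ys f pss S2, OF chain related_in_S2[OF R_ys] T2_closed]
      \<open>ys 0 = y0\<close>
    by simp
qed

lemma lang_subset:
  assumes "R s1 s2"
  shows "lang (S1, s1, T1) \<subseteq> lang (S2, s2, T2)"
proof -
  have "Fin (erase ls) \<in> lang (S2, s2, T2)" if run: "fin_run S1 T1 s1 ls" for ls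
  proof -
    obtain ls' where "fin_run S2 T2 s2 ls'" and "erase ls' = erase ls"
      using simulate_fin_run[OF run assms] by blast
    then have "Fin (erase ls') \<in> lang (S2, s2, T2)" unfolding lang_alt_def by blast
    with \<open>erase ls' = erase ls\<close> show ?thesis by simp
  qed
  moreover have "Inf f \<in> lang (S2, s2, T2)"
    if "inf_run S1 T1 s1 st l" and "inf_trace l (Inf f)" for st l f
    using simulate_inf_run[OF that assms] unfolding lang_alt_def by blast
  ultimately show ?thesis unfolding lang_alt_def[of S1] by blast
qed

end

section \<open>Simultaneous substitution\<close>

fun ssubst :: "('v \<Rightarrow> ('p, 'm, 'v) gty) \<Rightarrow> ('p, 'm, 'v) gty \<Rightarrow> ('p, 'm, 'v) gty" where
  "ssubst \<sigma> End = End"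
| "ssubst \<sigma> (Var s) = \<sigma> s"
| "ssubst \<sigma> (Rec s G) = Rec s (ssubst (\<sigma>(s := Var s)) G)"
| "ssubst \<sigma> (Choice p bs) = Choice p (map (\<lambda>(q, m, G). (q, m, ssubst \<sigma> G)) bs)"

lemma ssubst_Var_id: "ssubst Var X = X"
  by (induction X rule: bvs.induct) (auto intro!: map_idI)

lemma fv_ssubst: "fv (ssubst \<sigma> X) \<subseteq> (\<Union>x\<in>fv X. fv (\<sigma> x))"
proof (induction X arbitrary: \<sigma> rule: bvs.induct)
  case (3 r G)
  show ?case
  proof
    fix y assume "y \<in> fv (ssubst \<sigma> (Rec r G))"
    then have y: "y \<in> fv (ssubst (\<sigma>(r := Var r)) G)" "y \<noteq> r" by auto
    then obtain x where x: "x \<in> fv G" "y \<in> fv ((\<sigma>(r := Var r)) x)"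
      using 3[of "\<sigma>(r := Var r)"] by blast
    then have "x \<noteq> r" using y(2) by auto
    then show "y \<in> (\<Union>x\<in>fv (Rec r G). fv (\<sigma> x))" using x by auto
  qed
next
  case (4 p bs)
  show ?case
  proof
    fix y assume "y \<in> fv (ssubst \<sigma> (Choice p bs))"
    then obtain b where b: "b \<in> set bs" "y \<in> fv (ssubst \<sigma> (snd (snd b)))" by auto
    from 4[OF b(1), of \<sigma>] b(2) obtain x where "x \<in> fv (snd (snd b))" "y \<in> fv (\<sigma> x)"
      by blast
    with b(1) show "y \<in> (\<Union>x\<in>fv (Choice p bs). fv (\<sigma> x))" by auto
  qed
qed auto

lemma subst_fresh: "r \<notin> fv T \<Longrightarrow> subst T r N = T"
  by (induction T rule: bvs.induct) (auto intro!: map_idI)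

lemma subst_ssubst:
  assumes "r \<notin> set (bvs B)" and "\<forall>x\<in>fv B - {r}. r \<notin> fv (\<sigma> x)"
  shows "subst (ssubst (\<sigma>(r := Var r)) B) r N = ssubst (\<sigma>(r := N)) B"
  using assms
proof (induction B arbitrary: \<sigma> rule: bvs.induct)
  case (2 s)
  then show ?case by (auto simp: subst_fresh)
next
  case (3 s B)
  then have sr: "s \<noteq> r" by auto
  have "subst (ssubst ((\<sigma>(s := Var s))(r := Var r)) B) r N = ssubst ((\<sigma>(s := Var s))(r := N)) B"
    using 3 sr by (intro "3.IH") auto
  moreover have "\<sigma>(r := Var r, s := Var s) = \<sigma>(s := Var s, r := Var r)"
    and "\<sigma>(r := N, s := Var s) = \<sigma>(s := Var s, r := N)"
    using sr by (simp_all add: fun_upd_twist)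
  ultimately show ?case
    using sr by (simp only: ssubst.simps subst.simps if_False)
next
  case (4 p bs)
  have "subst (ssubst (\<sigma>(r := Var r)) (snd (snd b))) r N = ssubst (\<sigma>(r := N)) (snd (snd b))"
    if "b \<in> set bs" for b
    using 4 that by (intro "4.IH") auto
  then show ?case
    by (simp only: ssubst.simps subst.simps map_map) (auto intro!: map_cong simp: split_beta)
qed auto

lemma step_CR_Rec_iff: "step_CR (Rec r B) \<alpha> Z \<longleftrightarrow> step_CR (subst B r (Rec r B)) \<alpha> Z"
  by (auto elim: step_CR.cases intro: step_CR.Rec)

lemma subterms_refl: "X \<in> subterms X"
  by (cases X) auto

lemma subterms_trans: "Y \<in> subterms X \<Longrightarrow> Z \<in> subterms Y \<Longrightarrow> Z \<in> subterms X"
  by (induction X rule: bvs.induct) auto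

lemma subterms_Rec_body: "B \<in> subterms (Rec r B)"
  using subterms_refl[of B] by simp

lemma subterms_Choice_branch: "b \<in> set bs \<Longrightarrow> snd (snd b) \<in> subterms (Choice p bs)"
  using subterms_refl[of "snd (snd b)"] by auto

lemma Rec_subterm_bound: "Rec r B \<in> subterms T \<Longrightarrow> r \<in> set (bvs T)"
  by (induction T rule: bvs.induct) force+

lemma distinct_bvs_subterm: "X \<in> subterms T \<Longrightarrow> distinct (bvs T) \<Longrightarrow> distinct (bvs X)"
  by (induction T rule: bvs.induct) (auto simp: distinct_concat_iff)

lemma distinct_concat_map_same_elem:
  "distinct (concat (map f xs)) \<Longrightarrow> x \<in> set xs \<Longrightarrow> y \<in> set xs \<Longrightarrow>
    a \<in> set (f x) \<Longrightarrow> a \<in> set (f y) \<Longrightarrow> x = y"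
  by (induction xs) auto

lemma Rec_subterm_unique:
  "distinct (bvs T) \<Longrightarrow> Rec r B \<in> subterms T \<Longrightarrow> Rec r B' \<in> subterms T \<Longrightarrow> B = B'"
proof (induction T rule: bvs.induct)
  case (3 s G)
  then show ?case by (auto dest: Rec_subterm_bound)
next
  case (4 p bs)
  then obtain b1 b2 where b: "b1 \<in> set bs" "b2 \<in> set bs"
    "Rec r B \<in> subterms (snd (snd b1))" "Rec r B' \<in> subterms (snd (snd b2))" by auto
  have d: "distinct (concat (map (\<lambda>b. bvs (snd (snd b))) bs))" using 4(2) by simp
  have "r \<in> set (bvs (snd (snd b1)))" and "r \<in> set (bvs (snd (snd b2)))"
    using b(3,4) by (auto intro: Rec_subterm_bound)
  then have "b1 = b2" using distinct_concat_map_same_elem[OF d b(1,2), of r] by simp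
  moreover have "distinct (bvs (snd (snd b1)))" using d b(1) by (simp add: distinct_concat_iff)
  ultimately show ?case using 4(1)[OF b(1)] b(3,4) by simp
qed auto

lemma catr_cases:
  assumes "(X, a, X') \<in> catr T"
  obtains (Rec_unfold) r where "X = Rec r X'" and "a = None" and "X \<in> subterms T"
  | (Var_back) r B where "X = Var r" and "X' = Rec r B" and "a = None" and "X' \<in> subterms T"
  | (Choice) p bs q m where "X = Choice p bs" and "a = Some (p, q, m)" and "(q, m, X') \<in> set bs"
      and "X \<in> subterms T"
proof -
  have "(\<exists>r. X = Rec r X' \<and> a = None \<and> X \<in> subterms T)
    \<or> (\<exists>r B. X = Var r \<and> X' = Rec r B \<and> a = None \<and> X' \<in> subterms T)
    \<or> (\<exists>p bs q m. X = Choice p bs \<and> a = Some (p, q, m) \<and> (q, m, X') \<in> set bs \<and> X \<in> subterms T)"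
    using assms
  proof (induction T rule: bvs.induct)
    case (3 r G)
    have "subterms G \<subseteq> subterms (Rec r G)" by auto
    with 3 show ?case by auto
  next
    case (4 p bs)
    then obtain b where b: "b \<in> set bs"
      and "(X, a, X') = (Choice p bs, Some (p, fst b, fst (snd b)), snd (snd b))
        \<or> (X, a, X') \<in> catr (snd (snd b))"
      by auto
    moreover have "subterms (snd (snd b)) \<subseteq> subterms (Choice p bs)" using b by auto
    ultimately show ?case using "4.IH"[OF b] by auto
  qed auto
  then show ?thesis using that by blast
qed

lemma catr_unfold: "Rec r B \<in> subterms T \<Longrightarrow> (Rec r B, None, B) \<in> catr T"
proof (induction T rule: bvs.induct)
  case (4 p bs)
  then obtain b where "b \<in> set bs" "Rec r B \<in> subterms (snd (snd b))" by auto
  with 4(1) show ?case by fastforce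
qed auto

lemma catr_back: "Rec r B \<in> subterms T \<Longrightarrow> (Var r, None, Rec r B) \<in> catr T"
proof (induction T rule: bvs.induct)
  case (4 p bs)
  then obtain b where "b \<in> set bs" "Rec r B \<in> subterms (snd (snd b))" by auto
  with 4(1) show ?case by fastforce
qed auto

lemma catr_choice:
  "Choice p bs \<in> subterms T \<Longrightarrow> (q, m, X') \<in> set bs \<Longrightarrow> (Choice p bs, Some (p, q, m), X') \<in> catr T"
proof (induction T rule: bvs.induct)
  case (4 p' bs')
  show ?case
  proof (cases "Choice p bs = Choice p' bs'")
    case True
    then show ?thesis using 4(3) by force
  next
    case False
    then obtain b where "b \<in> set bs'" "Choice p bs \<in> subterms (snd (snd b))" using 4(2) by auto
    with 4(1) 4(3) show ?thesis by fastforce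
  qed
qed auto

lemma catr_target_subterm:
  assumes "(X, a, X') \<in> catr T"
  shows "X' \<in> subterms T"
  using assms
proof (cases rule: catr_cases)
  case (Rec_unfold r)
  then show ?thesis using subterms_trans subterms_Rec_body by metis
next
  case (Choice p bs q m)
  then have "X' \<in> subterms X" using subterms_Choice_branch[of "(q, m, X')" bs p] by simp
  then show ?thesis using Choice subterms_trans by blast
qed

section \<open>Unfolding environments\<close>

inductive unfold_env :: "('p, 'm, 'v) gty \<Rightarrow> ('v \<Rightarrow> ('p, 'm, 'v) gty) \<Rightarrow> ('p, 'm, 'v) gty \<Rightarrow> bool"
  for G where
  root: "unfold_env G Var G"
| Rec: "unfold_env G \<sigma> (Rec r B) \<Longrightarrow> unfold_env G (\<sigma>(r := ssubst \<sigma> (Rec r B))) B"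
| Choice: "unfold_env G \<sigma> (Choice p bs) \<Longrightarrow> b \<in> set bs \<Longrightarrow> unfold_env G \<sigma> (snd (snd b))"

lemma unfold_env_subterm: "unfold_env G \<sigma> X \<Longrightarrow> X \<in> subterms G"
  by (induction rule: unfold_env.induct)
    (auto intro: subterms_refl subterms_trans subterms_Rec_body subterms_Choice_branch)

lemma unfold_env_free_var:
  "unfold_env G \<sigma> X \<Longrightarrow> x \<in> fv X \<Longrightarrow> x \<notin> set (bvs G) \<Longrightarrow> \<sigma> x = Var x"
proof (induction arbitrary: x rule: unfold_env.induct)
  case (Rec \<sigma> r B)
  then show ?case using Rec_subterm_bound[OF unfold_env_subterm[OF Rec.hyps]] by auto
qed auto

lemma unfold_env_visible_step:
  assumes env: "unfold_env G \<sigma> X" and "(X, Some \<alpha>, X') \<in> catr G"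
  shows "unfold_env G \<sigma> X' \<and> step_CR (ssubst \<sigma> X) \<alpha> (ssubst \<sigma> X')"
  using \<open>(X, Some \<alpha>, X') \<in> catr G\<close>
proof (cases rule: catr_cases)
  case (Choice p bs q m)
  have "unfold_env G \<sigma> X'" using unfold_env.Choice[of G \<sigma> p bs "(q, m, X')"] env Choice by simp
  moreover have "(q, m, ssubst \<sigma> X') \<in> set (map (\<lambda>(q, m, G). (q, m, ssubst \<sigma> G)) bs)"
    using Choice by force
  then have "step_CR (ssubst \<sigma> X) \<alpha> (ssubst \<sigma> X')"
    using Choice by (simp add: step_CR.Choice)
  ultimately show ?thesis by blast
qed auto

context
  fixes G :: "('p, 'm, 'v) gty"
  assumes wf: "wf_gty G"
begin

lemma unfold_env_fresh:
  "unfold_env G \<sigma> X \<Longrightarrow> x \<in> fv X \<Longrightarrow> fv (\<sigma> x) \<inter> set (bvs G) = {}"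
proof (induction arbitrary: x rule: unfold_env.induct)
  case root
  then show ?case using wf by (auto simp: wf_gty_def)
next
  case (Rec \<sigma> r B)
  show ?case
  proof (cases "x = r")
    case True
    then have "fv ((\<sigma>(r := ssubst \<sigma> (Rec r B))) x) \<subseteq> (\<Union>y\<in>fv (Rec r B). fv (\<sigma> y))"
      using fv_ssubst[of \<sigma> "Rec r B"] by simp
    then show ?thesis using Rec.IH by blast
  qed (use Rec in auto)
qed auto

lemma unfold_env_bound_var:
  "unfold_env G \<sigma> X \<Longrightarrow> x \<in> fv X \<Longrightarrow> x \<in> set (bvs G) \<Longrightarrow>
    \<exists>\<sigma>' B. unfold_env G \<sigma>' (Rec x B) \<and> \<sigma> x = ssubst \<sigma>' (Rec x B)"
proof (induction arbitrary: x rule: unfold_env.induct)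
  case root
  then show ?case using wf by (auto simp: wf_gty_def)
next
  case (Rec \<sigma> r B)
  then show ?case by (cases "x = r") auto
qed auto

lemma unfold_env_VarE:
  assumes "unfold_env G \<sigma> (Var s)"
  obtains "\<sigma> s = Var s"
  | \<sigma>' B where "unfold_env G \<sigma>' (Rec s B)" and "\<sigma> s = ssubst \<sigma>' (Rec s B)"
  using assms unfold_env_free_var unfold_env_bound_var by force

lemma ssubst_unfold:
  assumes env: "unfold_env G \<sigma> (Rec r B)"
  shows "subst (ssubst (\<sigma>(r := Var r)) B) r (ssubst \<sigma> (Rec r B))
    = ssubst (\<sigma>(r := ssubst \<sigma> (Rec r B))) B"
proof (rule subst_ssubst)
  have sub: "Rec r B \<in> subterms G" using unfold_env_subterm[OF env] .
  moreover have "distinct (bvs G)" using wf by (simp add: wf_gty_def)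
  ultimately have "distinct (bvs (Rec r B))" by (rule distinct_bvs_subterm)
  then show "r \<notin> set (bvs B)" by simp
  show "\<forall>x\<in>fv B - {r}. r \<notin> fv (\<sigma> x)"
    using unfold_env_fresh[OF env] Rec_subterm_bound[OF sub] by auto
qed

lemma step_CR_unfold_env:
  "step_CR Y \<alpha> Y' \<Longrightarrow> unfold_env G \<sigma> X \<Longrightarrow> Y = ssubst \<sigma> X \<Longrightarrow>
    \<exists>ps X' \<sigma>'. weak_step (catr G) X (Some \<alpha>) ps X' \<and> unfold_env G \<sigma>' X' \<and> Y' = ssubst \<sigma>' X'"
proof (induction arbitrary: \<sigma> X rule: step_CR.induct)
  case (Choice q m Y' bs p)
  have "X \<noteq> Var s" for s
    using Choice.prems by (auto elim: unfold_env_VarE)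
  then obtain bsX where X: "X = Choice p bsX" and bs: "bs = map (\<lambda>(q, m, G). (q, m, ssubst \<sigma> G)) bsX"
    using Choice.prems by (cases X) auto
  with Choice.hyps obtain X' where b: "(q, m, X') \<in> set bsX" and Y': "Y' = ssubst \<sigma> X'"
    by auto
  have "(X, Some (p, q, m), X') \<in> catr G"
    using catr_choice[OF unfold_env_subterm[OF Choice.prems(1)[unfolded X]] b] X by simp
  then have "weak_step (catr G) X (Some (p, q, m)) [(Some (p, q, m), X')] X'"
    by (rule weak_step.visible)
  moreover have "unfold_env G \<sigma> X'"
    using unfold_env.Choice[of G \<sigma> p bsX "(q, m, X')"] Choice.prems(1) X b by simp
  ultimately show ?case using Y' by blast
next
  case (Rec B r \<alpha> Y')
  have unfold_Rec: "\<exists>ps X' \<sigma>'. weak_step (catr G) (Rec r B0) (Some \<alpha>) ps X'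
      \<and> unfold_env G \<sigma>' X' \<and> Y' = ssubst \<sigma>' X'"
    if env: "unfold_env G \<sigma>0 (Rec r B0)" and eq: "Rec r B = ssubst \<sigma>0 (Rec r B0)" for \<sigma>0 B0
  proof -
    have "subst B r (Rec r B) = ssubst (\<sigma>0(r := ssubst \<sigma>0 (Rec r B0))) B0"
      using ssubst_unfold[OF env] eq by simp
    from Rec.IH[OF unfold_env.Rec[OF env] this] obtain ps X' \<sigma>'
      where "weak_step (catr G) B0 (Some \<alpha>) ps X'" and "unfold_env G \<sigma>' X'" and "Y' = ssubst \<sigma>' X'"
      by blast
    moreover have "(Rec r B0, None, B0) \<in> catr G"
      by (rule catr_unfold[OF unfold_env_subterm[OF env]])
    ultimately show ?thesis by (blast intro: weak_step.silent)
  qed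
  show ?case
  proof (cases X)
    case (Rec s B0)
    then show ?thesis using Rec.prems unfold_Rec by auto
  next
    case (Var s)
    with Rec.prems obtain \<sigma>0 B0 where env: "unfold_env G \<sigma>0 (Rec s B0)"
      and eq: "Rec r B = ssubst \<sigma>0 (Rec s B0)"
      by (auto elim: unfold_env_VarE)
    have s: "s = r" using eq by simp
    obtain ps X' \<sigma>' where "weak_step (catr G) (Rec s B0) (Some \<alpha>) ps X'"
      and "unfold_env G \<sigma>' X'" and "Y' = ssubst \<sigma>' X'"
      using unfold_Rec[of \<sigma>0 B0] env eq unfolding s by blast
    moreover have "(Var s, None, Rec s B0) \<in> catr G"
      by (rule catr_back[OF unfold_env_subterm[OF env]])
    ultimately show ?thesis using Var by (blast intro: weak_step.silent)
  qed (use Rec.prems in auto)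
qed

end

section \<open>The two LTSs weakly simulate each other\<close>

(* The silent unfolding step of cat(G) changes the represented global type, since [Rec]
   unfolds only inside derivations; the represented types are therefore compared by their
   transitions. *)
definition same_steps :: "('p, 'm, 'v) gty \<Rightarrow> ('p, 'm, 'v) gty \<Rightarrow> bool" where
  "same_steps Y Y' \<longleftrightarrow> (\<forall>\<alpha> Z. step_CR Y \<alpha> Z \<longleftrightarrow> step_CR Y' \<alpha> Z)"

definition cat_rel :: "('p, 'm, 'v) gty \<Rightarrow> ('p, 'm, 'v) gty \<Rightarrow> ('p, 'm, 'v) gty \<Rightarrow> bool" where
  "cat_rel G X Y \<longleftrightarrow> (\<exists>\<sigma>. unfold_env G \<sigma> X \<and> same_steps (ssubst \<sigma> X) Y)"

lemma cat_rel_root: "cat_rel G G G"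
  unfolding cat_rel_def same_steps_def using unfold_env.root ssubst_Var_id by metis

definition CR_trans :: "(('p, 'm, 'v) gty \<times> ('p, 'm) interaction option \<times> ('p, 'm, 'v) gty) set" where
  "CR_trans = {(G1, Some \<alpha>, G2) | G1 \<alpha> G2. step_CR G1 \<alpha> G2}"

lemma CR_trans_iff: "(Y, a, Y') \<in> CR_trans \<longleftrightarrow> (\<exists>\<alpha>. a = Some \<alpha> \<and> step_CR Y \<alpha> Y')"
  by (auto simp: CR_trans_def)

lemma lts_CR_eq: "lts_CR G = (UNIV, G, CR_trans)"
  by (simp add: lts_CR_def CR_trans_def)

context
  fixes G :: "('p, 'm, 'v) gty"
  assumes wf: "wf_gty G"
begin

lemma unfold_env_silent_step:
  assumes env: "unfold_env G \<sigma> X" and "(X, None, X') \<in> catr G"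
  obtains \<sigma>' where "unfold_env G \<sigma>' X'" and "same_steps (ssubst \<sigma> X) (ssubst \<sigma>' X')"
  using \<open>(X, None, X') \<in> catr G\<close>
proof (cases rule: catr_cases)
  case (Rec_unfold r)
  let ?\<sigma>' = "\<sigma>(r := ssubst \<sigma> (Rec r X'))"
  have env': "unfold_env G \<sigma> (Rec r X')" using env Rec_unfold by simp
  have "same_steps (ssubst \<sigma> X) (ssubst ?\<sigma>' X')"
    unfolding same_steps_def Rec_unfold(1)
    using step_CR_Rec_iff[of r "ssubst (\<sigma>(r := Var r)) X'"] ssubst_unfold[OF wf env'] by simp
  with unfold_env.Rec[OF env'] show ?thesis by (rule that)
next
  case (Var_back r B)
  have "r \<in> set (bvs G)" using Rec_subterm_bound Var_back by simp
  then obtain \<sigma>' B' where env': "unfold_env G \<sigma>' (Rec r B')" and "\<sigma> r = ssubst \<sigma>' (Rec r B')"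
    using unfold_env_bound_var[OF wf, of \<sigma> X r] env Var_back by auto
  moreover have "B' = B"
    using Rec_subterm_unique unfold_env_subterm[OF env'] Var_back wf by (auto simp: wf_gty_def)
  ultimately show ?thesis using that Var_back by (auto simp: same_steps_def)
qed simp

lemma weak_simulation_cat_CR: "weak_simulation (catr G) UNIV CR_trans (cat_rel G)"
proof
  fix X Y a X' assume rel: "cat_rel G X Y" and t: "(X, a, X') \<in> catr G"
  then obtain \<sigma> where env: "unfold_env G \<sigma> X" and same: "same_steps (ssubst \<sigma> X) Y"
    unfolding cat_rel_def by blast
  show "\<exists>ps Y'. weak_step CR_trans Y a ps Y' \<and> cat_rel G X' Y'"
  proof (cases a)
    case None
    with unfold_env_silent_step[OF env] t obtain \<sigma>' where "unfold_env G \<sigma>' X'"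
      and "same_steps (ssubst \<sigma> X) (ssubst \<sigma>' X')"
      by blast
    with same have "cat_rel G X' Y" unfolding cat_rel_def same_steps_def by blast
    with None show ?thesis by (blast intro: weak_step.stay)
  next
    case (Some \<alpha>)
    with unfold_env_visible_step[OF env] t same
    have "unfold_env G \<sigma> X'" and "step_CR Y \<alpha> (ssubst \<sigma> X')"
      unfolding same_steps_def by blast+
    then have "weak_step CR_trans Y a [(a, ssubst \<sigma> X')] (ssubst \<sigma> X')"
      using Some by (auto simp: CR_trans_iff intro: weak_step.visible)
    moreover have "cat_rel G X' (ssubst \<sigma> X')"
      using \<open>unfold_env G \<sigma> X'\<close> by (auto simp: cat_rel_def same_steps_def)
    ultimately show ?thesis by blast
  qed
qed auto

lemma weak_simulation_CR_cat: "weak_simulation CR_trans (subterms G) (catr G) (\<lambda>Y X. cat_rel G X Y)"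
proof
  fix Y X a Y' assume rel: "cat_rel G X Y" and t: "(Y, a, Y') \<in> CR_trans"
  then obtain \<sigma> where env: "unfold_env G \<sigma> X" and same: "same_steps (ssubst \<sigma> X) Y"
    unfolding cat_rel_def by blast
  from t obtain \<alpha> where a: "a = Some \<alpha>" and "step_CR Y \<alpha> Y'"
    by (auto simp: CR_trans_iff)
  with same have "step_CR (ssubst \<sigma> X) \<alpha> Y'" unfolding same_steps_def by blast
  from step_CR_unfold_env[OF wf this env refl] obtain ps X' \<sigma>'
    where "weak_step (catr G) X (Some \<alpha>) ps X'" and "unfold_env G \<sigma>' X'" and "Y' = ssubst \<sigma>' X'"
    by blast
  then show "\<exists>ps X'. weak_step (catr G) X a ps X' \<and> cat_rel G X' Y'"
    using a by (auto simp: cat_rel_def same_steps_def)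
next
  show "X \<in> subterms G" if "cat_rel G X Y" for X Y
    using that unfold_env_subterm by (auto simp: cat_rel_def)
next
  show "y \<in> subterms G" if "(x, b, y) \<in> catr G" for x b y
    using catr_target_subterm[OF that] .
qed

end

theorem proposition5p2:
  fixes G :: "('p, 'm, 'v) gty"
  assumes "wf_gty G"
  shows "lang (cat G) = lang (lts_CR G)"
proof
  show "lang (cat G) \<subseteq> lang (lts_CR G)"
    unfolding cat_def lts_CR_eq
    by (rule weak_simulation.lang_subset[OF weak_simulation_cat_CR[OF assms] cat_rel_root])
  show "lang (lts_CR G) \<subseteq> lang (cat G)"
    unfolding cat_def lts_CR_eq
    by (rule weak_simulation.lang_subset[OF weak_simulation_CR_cat[OF assms] cat_rel_root])
qed

end
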